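(* Let $a,k,d,e$ be integers with $0\le a\le k$, $1\le d\le k$, and $e=d$ or $2e=d$. Then for all integers $m,n\ge0$, $${}_d\overline{b}_{dk+e,\,da+d}(m,n)-{}_d\overline{b}_{dk+e,\,da}(m,n)={}_db_{dk+e,\,dk-da+e}(m-da,\,n-m).$$
   Context: Partitions are finite non-increasing sequences of positive integers; $\phi_i$ is the number of occurrences of $i$ as a part. For an integer $N$ and integers $m,n$, ${}_db_{dk+e,N}(m,n)$ is the number of partitions of $n$ into exactly $m$ parts with $\phi_i+\phi_{i+1}<dk+e$ for all $i\ge1$, $\phi_1<N$, and $d\mid\phi_{2i}$ for all $i\ge1$; ${}_d\overline{b}_{dk+e,N}(m,n)$ is the number of partitions of $n$ into exactly $m$ parts with $\phi_i+\phi_{i+1}<dk+e$ for all $i\ge1$, $\phi_1<N$, and $d\mid\phi_{2i+1}$ for all $i\ge0$. Both counts are $0$ when $m<0$ or $n<0$. *)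

theory Defs
  imports Main "HOL-Library.Multiset"
begin

text \<open>A partition is a finite multiset of positive naturals; phi_i = count P i.
  The counts are taken with integer arguments m, n and are 0 when m < 0 or n < 0.\<close>

definition partitions_mn :: "int \<Rightarrow> int \<Rightarrow> nat multiset set" where
  "partitions_mn m n = {P. (\<forall>x\<in>#P. 0 < x) \<and> int (size P) = m \<and> int (sum_mset P) = n}"

definition b_count :: "int \<Rightarrow> int \<Rightarrow> int \<Rightarrow> int \<Rightarrow> int \<Rightarrow> nat" where
  "b_count d L N m n =
     (if m < 0 \<or> n < 0 then 0 else
      card {P \<in> partitions_mn m n.
              (\<forall>i\<ge>1. int (count P i + count P (i+1)) < L) \<and>
              int (count P 1) < N \<and>
              (\<forall>i\<ge>1. d dvd int (count P (2*i)))})"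

definition bbar_count :: "int \<Rightarrow> int \<Rightarrow> int \<Rightarrow> int \<Rightarrow> int \<Rightarrow> nat" where
  "bbar_count d L N m n =
     (if m < 0 \<or> n < 0 then 0 else
      card {P \<in> partitions_mn m n.
              (\<forall>i\<ge>1. int (count P i + count P (i+1)) < L) \<and>
              int (count P 1) < N \<and>
              (\<forall>i\<ge>0. d dvd int (count P (2*i+1)))})"

end

theory Submission
  imports Defs
begin

text \<open>Adding 1 to every part of a partition Q and adjoining c parts equal to 1 maps the
  partitions of n - m into m - c parts bijectively onto the partitions of n into m parts with
  exactly c ones. It moves every multiplicity up one place, so d | phi_2i for Q becomes
  d | phi_2i+1, the condition phi_1 + phi_2 < L becomes phi_1(Q) < L - c, and the new
  condition d | phi_1 reads d | c. Since phi_1 is a multiple of d on the bbar side, raising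
  the bound on phi_1 from d a to d a + d adds exactly the partitions with phi_1 = d a, which
  are the images of the partitions counted on the right. This works for every L and a \<ge> 0.\<close>

lemma finite_partitions_mn: "finite (partitions_mn m n)"
proof (rule finite_subset)
  show "partitions_mn m n \<subseteq> multisets_of_size {0..nat n} (nat m)"
  proof
    fix P assume "P \<in> partitions_mn m n"
    then have "nat m = size P" "nat n = sum_mset P"
      by (auto simp: partitions_mn_def simp del: of_nat_sum_mset)
    moreover have "x \<le> sum_mset P" if "x \<in># P" for x
      using that by (induction P) auto
    ultimately show "P \<in> multisets_of_size {0..nat n} (nat m)"
      by (auto simp: multisets_of_size_def)
  qed
qed auto

lemma partitions_mn_negative: "m < 0 \<or> n < 0 \<Longrightarrow> partitions_mn m n = {}"
  by (auto simp: partitions_mn_def simp del: of_nat_sum_mset)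

lemma positive_mset_iff: "(\<forall>x\<in>#P. 0 < (x::nat)) \<longleftrightarrow> 0 \<notin># P"
  by (auto intro: gr0I)

lemma zero_not_in_partitions_mn: "P \<in> partitions_mn m n \<Longrightarrow> 0 \<notin># P"
  by (auto simp: partitions_mn_def positive_mset_iff)

definition pair_sums_below :: "int \<Rightarrow> nat multiset \<Rightarrow> bool" where
  "pair_sums_below L P \<longleftrightarrow> (\<forall>i\<ge>1. int (count P i + count P (i+1)) < L)"

definition b_set :: "int \<Rightarrow> int \<Rightarrow> int \<Rightarrow> int \<Rightarrow> int \<Rightarrow> nat multiset set" where
  "b_set d L N m n = {P \<in> partitions_mn m n. pair_sums_below L P \<and>
     int (count P 1) < N \<and> (\<forall>i\<ge>1. d dvd int (count P (2*i)))}"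

definition bbar_set :: "int \<Rightarrow> int \<Rightarrow> int \<Rightarrow> int \<Rightarrow> int \<Rightarrow> nat multiset set" where
  "bbar_set d L N m n = {P \<in> partitions_mn m n. pair_sums_below L P \<and>
     int (count P 1) < N \<and> (\<forall>i. d dvd int (count P (2*i+1)))}"

definition bbar_exact_set :: "int \<Rightarrow> int \<Rightarrow> nat \<Rightarrow> int \<Rightarrow> int \<Rightarrow> nat multiset set" where
  "bbar_exact_set d L c m n = {P \<in> partitions_mn m n. pair_sums_below L P \<and>
     count P 1 = c \<and> (\<forall>i. d dvd int (count P (2*i+1)))}"

lemma b_count_eq_card: "b_count d L N m n = card (b_set d L N m n)"
  by (simp add: b_count_def b_set_def pair_sums_below_def partitions_mn_negative)

lemma bbar_count_eq_card: "bbar_count d L N m n = card (bbar_set d L N m n)"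
  by (simp add: bbar_count_def bbar_set_def pair_sums_below_def partitions_mn_negative)

lemma dvd_less_add_iff:
  fixes d x y :: int
  assumes "0 < d" "d dvd x" "d dvd y"
  shows "x < y + d \<longleftrightarrow> x \<le> y"
proof -
  obtain s t where st: "x = d * s" "y = d * t"
    using assms(2,3) by (meson dvdE)
  have "x < y + d \<longleftrightarrow> d * s < d * (t + 1)"
    by (simp add: st algebra_simps)
  also have "\<dots> \<longleftrightarrow> s \<le> t"
    using assms(1) by (simp add: mult_less_cancel_left)
  also have "\<dots> \<longleftrightarrow> x \<le> y"
    using assms(1) by (simp add: st mult_le_cancel_left)
  finally show ?thesis .
qed

lemma bbar_set_raise_bound:
  assumes "0 < d" "d dvd int c"
  shows "bbar_set d L (int c + d) m n = bbar_set d L (int c) m n \<union> bbar_exact_set d L c m n"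
proof -
  have "int (count P 1) < int c + d \<longleftrightarrow> int (count P 1) < int c \<or> count P 1 = c"
    if "\<forall>i. d dvd int (count P (2*i+1))" for P :: "nat multiset"
  proof -
    have "d dvd int (count P 1)"
      using that[rule_format, of 0] by simp
    then have "int (count P 1) < int c + d \<longleftrightarrow> int (count P 1) \<le> int c"
      by (rule dvd_less_add_iff[OF assms(1) _ assms(2)])
    then show ?thesis
      by linarith
  qed
  then show ?thesis
    unfolding bbar_set_def bbar_exact_set_def by auto
qed

lemma card_bbar_set_raise_bound:
  assumes "0 < d" "d dvd int c"
  shows "card (bbar_set d L (int c + d) m n)
       = card (bbar_set d L (int c) m n) + card (bbar_exact_set d L c m n)"
proof -
  have "finite (bbar_set d L N m n)" "finite (bbar_exact_set d L c m n)" for N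
    by (simp_all add: bbar_set_def bbar_exact_set_def finite_partitions_mn)
  moreover have "bbar_set d L (int c) m n \<inter> bbar_exact_set d L c m n = {}"
    by (auto simp: bbar_set_def bbar_exact_set_def)
  ultimately show ?thesis
    by (simp add: bbar_set_raise_bound[OF assms] card_Un_disjoint)
qed

definition lift_partition :: "nat \<Rightarrow> nat multiset \<Rightarrow> nat multiset" where
  "lift_partition c Q = image_mset Suc Q + replicate_mset c 1"

definition unlift_partition :: "nat multiset \<Rightarrow> nat multiset" where
  "unlift_partition P = image_mset (\<lambda>x. x - 1) (filter_mset (\<lambda>x. 2 \<le> x) P)"

lemma count_image_mset_Suc: "count (image_mset Suc Q) (Suc i) = count Q i"
  by (induction Q) auto

lemma count_lift_partition_0: "count (lift_partition c Q) 0 = 0"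
  unfolding lift_partition_def by (induction Q) auto

lemma count_lift_partition_Suc:
  "count (lift_partition c Q) (Suc i) = count Q i + (if i = 0 then c else 0)"
  by (simp add: lift_partition_def count_image_mset_Suc)

lemma count_unlift_partition:
  "count (unlift_partition P) i = (if i = 0 then 0 else count P (Suc i))"
  unfolding unlift_partition_def by (induction P) auto

lemma lift_unlift_partition:
  assumes "0 \<notin># P" "count P 1 = c"
  shows "lift_partition c (unlift_partition P) = P"
proof (rule multiset_eqI)
  fix x
  show "count (lift_partition c (unlift_partition P)) x = count P x"
    using assms
    by (cases x) (auto simp: count_lift_partition_0 count_lift_partition_Suc
        count_unlift_partition not_in_iff)
qed

lemma unlift_lift_partition:
  assumes "0 \<notin># Q"
  shows "unlift_partition (lift_partition c Q) = Q"
proof (rule multiset_eqI)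
  fix x
  show "count (unlift_partition (lift_partition c Q)) x = count Q x"
    using assms by (auto simp: count_lift_partition_Suc count_unlift_partition not_in_iff)
qed

lemma size_lift_partition: "size (lift_partition c Q) = size Q + c"
  by (simp add: lift_partition_def)

lemma sum_mset_lift_partition: "sum_mset (lift_partition c Q) = sum_mset Q + size Q + c"
  by (induction Q) (auto simp: lift_partition_def)

lemma lift_partition_in_partitions_mn:
  assumes "0 \<notin># Q"
  shows "lift_partition c Q \<in> partitions_mn m n \<longleftrightarrow> Q \<in> partitions_mn (m - int c) (n - m)"
  using assms unfolding partitions_mn_def
  by (auto simp: positive_mset_iff not_in_iff count_lift_partition_0 size_lift_partition
      sum_mset_lift_partition simp del: of_nat_sum_mset)

lemma all_ge_one_split: "(\<forall>i\<ge>1. F i) \<longleftrightarrow> F (1::nat) \<and> (\<forall>i\<ge>1. F (Suc i))"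
proof
  assume "\<forall>i\<ge>1. F i"
  then show "F 1 \<and> (\<forall>i\<ge>1. F (Suc i))"
    by simp
next
  assume F: "F 1 \<and> (\<forall>i\<ge>1. F (Suc i))"
  show "\<forall>i\<ge>1. F i"
  proof (intro allI impI)
    fix i :: nat
    assume "1 \<le> i"
    then obtain j where "i = Suc j"
      by (cases i) auto
    then show "F i"
      using F by (cases "j = 0") simp_all
  qed
qed

lemma pair_sums_below_lift_partition:
  assumes "0 \<notin># Q"
  shows "pair_sums_below L (lift_partition c Q)
     \<longleftrightarrow> pair_sums_below L Q \<and> int (count Q 1) < L - int c"
  using assms unfolding pair_sums_below_def
  by (subst all_ge_one_split) (auto simp: not_in_iff count_lift_partition_Suc)

lemma odd_counts_dvd_lift_partition:
  assumes "0 \<notin># Q"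
  shows "(\<forall>i. d dvd int (count (lift_partition c Q) (2*i+1)))
     \<longleftrightarrow> d dvd int c \<and> (\<forall>i\<ge>1. d dvd int (count Q (2*i)))"
  using assms by (auto simp: not_in_iff count_lift_partition_Suc)

lemma bij_betw_lift_partition:
  assumes "d dvd int c"
  shows "bij_betw (lift_partition c)
           (b_set d L (L - int c) (m - int c) (n - m)) (bbar_exact_set d L c m n)"
proof (rule bij_betw_byWitness[where f' = unlift_partition])
  show "\<forall>Q\<in>b_set d L (L - int c) (m - int c) (n - m). unlift_partition (lift_partition c Q) = Q"
    unfolding b_set_def using zero_not_in_partitions_mn unlift_lift_partition by blast
  show "\<forall>P\<in>bbar_exact_set d L c m n. lift_partition c (unlift_partition P) = P"
    unfolding bbar_exact_set_def using zero_not_in_partitions_mn lift_unlift_partition by blast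
  show "lift_partition c ` b_set d L (L - int c) (m - int c) (n - m) \<subseteq> bbar_exact_set d L c m n"
  proof
    fix P assume "P \<in> lift_partition c ` b_set d L (L - int c) (m - int c) (n - m)"
    then obtain Q where Q: "Q \<in> b_set d L (L - int c) (m - int c) (n - m)"
      and P: "P = lift_partition c Q"
      by blast
    have Q0: "0 \<notin># Q"
      using Q zero_not_in_partitions_mn unfolding b_set_def by blast
    then have "count P 1 = c"
      by (simp add: P count_lift_partition_Suc not_in_iff)
    then show "P \<in> bbar_exact_set d L c m n"
      using Q assms lift_partition_in_partitions_mn[OF Q0] pair_sums_below_lift_partition[OF Q0]
        odd_counts_dvd_lift_partition[OF Q0]
      unfolding P b_set_def bbar_exact_set_def by blast
  qed
  show "unlift_partition ` bbar_exact_set d L c m n \<subseteq> b_set d L (L - int c) (m - int c) (n - m)"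
  proof
    fix Q assume "Q \<in> unlift_partition ` bbar_exact_set d L c m n"
    then obtain P where P: "P \<in> bbar_exact_set d L c m n" and Q: "Q = unlift_partition P"
      by blast
    have Q0: "0 \<notin># Q"
      by (simp add: Q not_in_iff count_unlift_partition)
    have "lift_partition c Q \<in> bbar_exact_set d L c m n"
      using P zero_not_in_partitions_mn lift_unlift_partition unfolding Q bbar_exact_set_def by auto
    then show "Q \<in> b_set d L (L - int c) (m - int c) (n - m)"
      using lift_partition_in_partitions_mn[OF Q0] pair_sums_below_lift_partition[OF Q0]
        odd_counts_dvd_lift_partition[OF Q0]
      unfolding b_set_def bbar_exact_set_def by blast
  qed
qed

theorem mainTheorem5:
  fixes a k d e m n :: int
  assumes "0 \<le> a" "a \<le> k" "1 \<le> d" "d \<le> k" "e = d \<or> 2 * e = d"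
    and "0 \<le> m" "0 \<le> n"
  shows "int (bbar_count d (d*k+e) (d*a+d) m n) - int (bbar_count d (d*k+e) (d*a) m n)
         = int (b_count d (d*k+e) (d*k-d*a+e) (m-d*a) (n-m))"
proof -
  define c where "c = nat (d*a)"
  have c: "int c = d*a"
    using assms(1,3) by (simp add: c_def)
  then have "d dvd int c"
    by simp
  then have "bbar_count d (d*k+e) (d*a+d) m n
      = bbar_count d (d*k+e) (d*a) m n + card (bbar_exact_set d (d*k+e) c m n)"
    using card_bbar_set_raise_bound[of d c] assms(3) by (simp add: bbar_count_eq_card c)
  moreover have "card (bbar_exact_set d (d*k+e) c m n) = b_count d (d*k+e) (d*k-d*a+e) (m-d*a) (n-m)"
    using bij_betw_same_card[OF bij_betw_lift_partition[OF \<open>d dvd int c\<close>]]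
    by (simp add: b_count_eq_card c algebra_simps)
  ultimately show ?thesis
    by simp
qed

end
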